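(* Consider a drone cellular network in which drone base stations (DBSs) lie in the plane $z=h$ (the DBS plane), $h>0$, and a typical user equipment (UE) is located at the origin $\mathbf{o}=(0,0,0)$; let $\mathbf{o}'=(0,0,h)$. Suppose every DBS moves in the DBS plane along a straight line, each in its own direction, and all DBSs move with the same constant speed $v>0$ (same speed model, SSM). At each time $t$ the serving DBS of the typical UE is the DBS closest to the UE (equivalently, the DBS whose position minimizes the distance to $\mathbf{o}'$). Let $D_0$ be the serving DBS at time $t=t_0$, and suppose that a handover occurs at time $t=t_1>t_0$, after which the DBS $D_1$ becomes the serving DBS. Then $D_0$ cannot become the serving DBS again at any time $t>t_1$.
   Context: A handover occurs when the serving DBS (the nearest DBS to the typical UE) changes. *)

theory Defs
  imports "HOL-Analysis.Analysis"
begin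

text \<open>Points of space are vectors in real^3; the typical UE sits at the origin 0.
  DBS i starts at p i (in the plane z = h) and moves with speed v along the unit
  direction w i (parallel to the DBS plane, third component 0).\<close>

definition dbs_pos :: "('a \<Rightarrow> real^3) \<Rightarrow> ('a \<Rightarrow> real^3) \<Rightarrow> real \<Rightarrow> 'a \<Rightarrow> real \<Rightarrow> real^3" where
  "dbs_pos p w v i t = p i + (v * t) *\<^sub>R w i"

definition serving :: "'a set \<Rightarrow> ('a \<Rightarrow> real \<Rightarrow> real^3) \<Rightarrow> real \<Rightarrow> 'a \<Rightarrow> bool" where
  "serving I pos t i \<longleftrightarrow> i \<in> I \<and> (\<forall>j\<in>I. dist (pos i t) 0 \<le> dist (pos j t) 0)"

end

theory Submission
  imports Defs
begin

text \<open>For two points moving with the same speed along straight lines, the difference of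
  their squared distances to the origin is affine in time: the quadratic terms cancel. It is
  \<open>\<le> 0\<close> at t0, where D0 serves, and \<open>> 0\<close> just after t1, where D1 is strictly closer, so its
  slope is positive and it stays positive from then on. Neither the height of the DBS plane nor
  the fact that the motion is horizontal plays a role; only the equal speeds matter.\<close>

lemma norm_add_scaleR_unit_power2:
  fixes a u :: "'a::real_inner"
  assumes "norm u = 1"
  shows "(norm (a + t *\<^sub>R u))\<^sup>2 = (norm a)\<^sup>2 + 2 * t * (a \<bullet> u) + t\<^sup>2"
proof -
  have "u \<bullet> u = 1"
    using assms by (simp add: power2_norm_eq_inner[symmetric])
  then show ?thesis
    unfolding power2_norm_eq_inner
    by (simp add: inner_add_left inner_add_right inner_commute power2_eq_square algebra_simps)
qed

lemma unit_speed_norm_power2_diff: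
  fixes a b u w :: "'a::real_inner"
  assumes "norm u = 1" and "norm w = 1"
  shows "(norm (a + t *\<^sub>R u))\<^sup>2 - (norm (b + t *\<^sub>R w))\<^sup>2
           = (norm a)\<^sup>2 - (norm b)\<^sup>2 + 2 * t * (a \<bullet> u - b \<bullet> w)"
  using assms by (simp add: norm_add_scaleR_unit_power2 algebra_simps)

lemma affine_pos_after_sign_change:
  fixes A B t0 ta s :: real
  assumes "A + B * t0 \<le> 0" and "A + B * ta > 0" and "t0 < ta" and "ta \<le> s"
  shows "A + B * s > 0"
proof -
  have "B * (ta - t0) > 0"
    using assms(1,2) by (simp add: algebra_simps)
  then have "B > 0"
    using assms(3) by (simp add: zero_less_mult_iff)
  then have "B * (s - ta) \<ge> 0"
    using assms(4) by simp
  then show ?thesis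
    using assms(2) by (simp add: algebra_simps)
qed

lemma unit_speed_overtaking_persists:
  fixes a b u w :: "'a::real_inner"
  assumes "norm u = 1" and "norm w = 1" and "t0 < ta" and "ta \<le> s"
    and "norm (a + t0 *\<^sub>R u) \<le> norm (b + t0 *\<^sub>R w)"
    and "norm (b + ta *\<^sub>R w) < norm (a + ta *\<^sub>R u)"
  shows "norm (b + s *\<^sub>R w) < norm (a + s *\<^sub>R u)"
proof -
  define g where "g t = (norm (a + t *\<^sub>R u))\<^sup>2 - (norm (b + t *\<^sub>R w))\<^sup>2" for t
  define A where "A = (norm a)\<^sup>2 - (norm b)\<^sup>2"
  define B where "B = 2 * (a \<bullet> u - b \<bullet> w)"
  have g_affine: "g t = A + B * t" for t
    unfolding g_def A_def B_def using unit_speed_norm_power2_diff[OF assms(1,2)]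
    by (simp add: algebra_simps)
  have "g t0 \<le> 0"
    using assms(5) unfolding g_def by (simp add: power_mono)
  moreover have "g ta > 0"
    using assms(6) unfolding g_def by (simp add: power_strict_mono)
  ultimately have "g s > 0"
    using affine_pos_after_sign_change[OF _ _ assms(3,4)] by (simp add: g_affine)
  then show ?thesis
    unfolding g_def by (simp add: power_less_imp_less_base)
qed

lemma serving_norm_le:
  assumes "serving I pos t i" and "j \<in> I"
  shows "norm (pos i t) \<le> norm (pos j t)"
  using assms by (simp add: serving_def dist_norm)

lemma serving_norm_less:
  assumes "serving I pos t j" and "\<not> serving I pos t i" and "i \<in> I"
  shows "norm (pos j t) < norm (pos i t)"
  using assms by (force simp: serving_def dist_norm not_le)

lemma not_serving_if_closer:
  assumes "j \<in> I" and "norm (pos j t) < norm (pos i t)"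
  shows "\<not> serving I pos t i"
  using assms by (force simp: serving_def dist_norm)

theorem lemma2:
  fixes I :: "'a set" and p w :: "'a \<Rightarrow> real^3" and h v t0 t1 :: real and D0 D1 :: 'a
  assumes "h > 0" and "v > 0"
    and "\<forall>i\<in>I. p i $ 3 = h \<and> w i $ 3 = 0 \<and> norm (w i) = 1"
    and "D0 \<in> I" and "D1 \<in> I" and "D1 \<noteq> D0"
    and "t0 < t1"
    and "\<forall>t. t0 \<le> t \<and> t < t1 \<longrightarrow> serving I (dbs_pos p w v) t D0"
    and "\<exists>\<epsilon>>0. \<forall>t. t1 < t \<and> t < t1 + \<epsilon> \<longrightarrow>
            serving I (dbs_pos p w v) t D1 \<and> \<not> serving I (dbs_pos p w v) t D0"
  shows "\<forall>t>t1. \<not> serving I (dbs_pos p w v) t D0"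
proof (intro allI impI)
  fix s assume "s > t1"
  let ?pos = "dbs_pos p w v"
  obtain e where "e > 0" and after_handover: "\<And>t. t1 < t \<Longrightarrow> t < t1 + e \<Longrightarrow>
      serving I ?pos t D1 \<and> \<not> serving I ?pos t D0"
    using assms(9) by blast
  define ta where "ta = (t1 + min s (t1 + e)) / 2"
  have "t1 < ta" "ta < t1 + e" "ta \<le> s"
    using \<open>s > t1\<close> \<open>e > 0\<close> unfolding ta_def by auto
  have "serving I ?pos t0 D0"
    using assms(7,8) by simp
  have "serving I ?pos ta D1" "\<not> serving I ?pos ta D0"
    using after_handover \<open>t1 < ta\<close> \<open>ta < t1 + e\<close> by simp_all
  have "norm (w D0) = 1" "norm (w D1) = 1"
    using assms(3-5) by simp_all
  moreover have "v * t0 < v * ta" "v * ta \<le> v * s"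
    using assms(2,7) \<open>t1 < ta\<close> \<open>ta \<le> s\<close> by simp_all
  moreover have "norm (?pos D0 t0) \<le> norm (?pos D1 t0)"
    by (rule serving_norm_le[OF \<open>serving I ?pos t0 D0\<close> assms(5)])
  moreover have "norm (?pos D1 ta) < norm (?pos D0 ta)"
    by (rule serving_norm_less[OF \<open>serving I ?pos ta D1\<close> \<open>\<not> serving I ?pos ta D0\<close> assms(4)])
  ultimately have "norm (?pos D1 s) < norm (?pos D0 s)"
    unfolding dbs_pos_def by (rule unit_speed_overtaking_persists)
  then show "\<not> serving I ?pos s D0"
    by (rule not_serving_if_closer[OF assms(5)])
qed

end
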